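(* Let $N,Q,S\ge 1$ be integers, let $\mathbf{H}\in\mathbb{R}^{Q\times N}$ with $\mathbf{H}\neq\mathbf{0}$, $\mathbf{y}\in\mathbb{R}^Q$, let $\mathbf{V}_0$ be a real matrix with $N$ columns, and for each $s\in\{1,\dots,S\}$ let $P_s\ge1$, $\mathbf{V}_s\in\mathbb{R}^{P_s\times N}$ and $\mathbf{c}_s\in\mathbb{R}^{P_s}$. Let $\Phi:\mathbb{R}^Q\to\mathbb{R}$ and, for every $\delta>0$ and $s\in\{1,\dots,S\}$, $\psi_{s,\delta}:\mathbb{R}\to\mathbb{R}$. For $\delta>0$ define $$F_\delta(\mathbf{x})=\Phi(\mathbf{H}\mathbf{x}-\mathbf{y})+\sum_{s=1}^S\psi_{s,\delta}(\|\mathbf{V}_s\mathbf{x}-\mathbf{c}_s\|)+\|\mathbf{V}_0\mathbf{x}\|^2,\qquad \mathbf{x}\in\mathbb{R}^N.$$ Assume: (i) $\Phi$ is continuous and coercive ($\lim_{\|\mathbf{z}\|\to+\infty}\Phi(\mathbf{z})=+\infty$); (ii) for every $\delta>0$ and every $s\in\{1,\dots,S\}$, $\psi_{s,\delta}$ is continuous and takes nonnegative values; (iii) $\operatorname{Ker}\mathbf{H}\cap\operatorname{Ker}\mathbf{V}_0=\{\mathbf{0}\}$. Then, for every $\delta>0$, (i) $F_\delta$ is coercive, and (ii) the set of minimizers of $F_\delta$ is nonempty and compact.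
   Context: $\|\cdot\|$ denotes the Euclidean norm. *)

theory Defs
  imports "HOL-Analysis.Analysis"
begin

text \<open>The matrix V_s (P_s x N) is given by its rows V s i, i < P s; c s i are the
  components of c_s. This is the Euclidean norm of V_s x - c_s.\<close>
definition resid_norm :: "(nat \<Rightarrow> real ^ 'n) \<Rightarrow> (nat \<Rightarrow> real) \<Rightarrow> nat \<Rightarrow> real ^ 'n \<Rightarrow> real" where
  "resid_norm Vs cs p x = sqrt (\<Sum>i<p. (Vs i \<bullet> x - cs i)\<^sup>2)"

definition F_obj ::
  "(real ^ 'q \<Rightarrow> real) \<Rightarrow> real ^ 'n ^ 'q \<Rightarrow> real ^ 'q \<Rightarrow> real ^ 'n ^ 'm
   \<Rightarrow> nat \<Rightarrow> (nat \<Rightarrow> nat) \<Rightarrow> (nat \<Rightarrow> nat \<Rightarrow> real ^ 'n) \<Rightarrow> (nat \<Rightarrow> nat \<Rightarrow> real)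
   \<Rightarrow> (nat \<Rightarrow> real \<Rightarrow> real \<Rightarrow> real) \<Rightarrow> real \<Rightarrow> real ^ 'n \<Rightarrow> real" where
  "F_obj Phi H y V0 S P V c psi \<delta> x =
     Phi (H *v x - y) + (\<Sum>s=1..S. psi s \<delta> (resid_norm (V s) (c s) (P s) x))
     + (norm (V0 *v x))\<^sup>2"

definition coercive :: "('a::real_normed_vector \<Rightarrow> real) \<Rightarrow> bool" where
  "coercive f \<longleftrightarrow> filterlim f at_top at_infinity"

end

theory Submission
  imports Defs
begin

text \<open>Since \<open>Ker H \<inter> Ker V\<^sub>0 = {0}\<close>, the map \<open>x \<mapsto> (H x, V\<^sub>0 x)\<close> is injective, so
  \<open>\<parallel>H x\<parallel> + \<parallel>V\<^sub>0 x\<parallel>\<close> grows at least linearly in \<open>\<parallel>x\<parallel>\<close>. Far from the origin either the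
  residual \<open>H x - y\<close> is large, and then the coercive fidelity term \<open>\<Phi>\<close> is large, or
  \<open>\<parallel>V\<^sub>0 x\<parallel>\<close> is large, and then the quadratic term dominates the lower bound of \<open>\<Phi>\<close>.
  The penalties \<open>\<psi>\<^sub>s\<^sub>,\<^sub>\<delta>\<close> are nonnegative and only help. A continuous coercive function on a
  finite-dimensional space has compact sublevel sets, hence attains its minimum on a
  compact set.\<close>

lemma coercive_iff:
  fixes f :: "'a::real_normed_vector \<Rightarrow> real"
  shows "coercive f \<longleftrightarrow> (\<forall>M. \<exists>R. \<forall>x. R \<le> norm x \<longrightarrow> M \<le> f x)"
  unfolding coercive_def filterlim_at_top eventually_at_infinity by blast

lemma coercive_mono:
  fixes f g :: "'a::real_normed_vector \<Rightarrow> real"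
  assumes "coercive f" and "\<And>x. f x \<le> g x"
  shows "coercive g"
  using assms unfolding coercive_def
  by (auto intro: filterlim_at_top_mono)

lemma coercive_bdd_below:
  fixes f :: "'a::euclidean_space \<Rightarrow> real"
  assumes "continuous_on UNIV f" and "coercive f"
  obtains m where "\<And>x. m \<le> f x"
proof -
  obtain R where R: "\<And>x. R \<le> norm x \<Longrightarrow> 0 \<le> f x"
    using assms(2) unfolding coercive_iff by blast
  have "cball 0 (max R 0) \<noteq> {}"
    by auto
  then obtain x0 where x0: "\<forall>x\<in>cball 0 (max R 0). f x0 \<le> f x"
    using continuous_attains_inf[OF compact_cball _ continuous_on_subset[OF assms(1)]] by blast
  have "min (f x0) 0 \<le> f x" for x
    using R[of x] x0[rule_format, of x] by (cases "R \<le> norm x") (auto simp: min_le_iff_disj)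
  then show thesis by (rule that)
qed

lemma compact_sublevel_set_coercive:
  fixes f :: "'a::euclidean_space \<Rightarrow> real"
  assumes "continuous_on UNIV f" and "coercive f"
  shows "compact {x. f x \<le> c}"
proof -
  obtain R where R: "\<And>x. R \<le> norm x \<Longrightarrow> c + 1 \<le> f x"
    using assms(2) unfolding coercive_iff by blast
  have "norm x \<le> R" if "f x \<le> c" for x
    using R[of x] that by linarith
  then have "{x. f x \<le> c} \<subseteq> cball 0 R"
    by auto
  then have "bounded {x. f x \<le> c}"
    using bounded_cball bounded_subset by blast
  moreover have "closed {x. f x \<le> c}"
    by (intro closed_Collect_le continuous_on_const assms(1))
  ultimately show ?thesis
    by (simp add: compact_eq_bounded_closed)
qed

lemma coercive_minimizers_nonempty_compact:
  fixes f :: "'a::euclidean_space \<Rightarrow> real"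
  assumes "continuous_on UNIV f" and "coercive f"
  shows "{x. \<forall>z. f x \<le> f z} \<noteq> {} \<and> compact {x. \<forall>z. f x \<le> f z}"
proof -
  let ?K = "{x. f x \<le> f 0}"
  have "compact ?K" "?K \<noteq> {}"
    using compact_sublevel_set_coercive[OF assms] by auto
  then obtain x0 where "x0 \<in> ?K" and x0: "\<forall>x\<in>?K. f x0 \<le> f x"
    using continuous_attains_inf[OF _ _ continuous_on_subset[OF assms(1)]] by blast
  have min: "f x0 \<le> f z" for z
  proof (cases "f z \<le> f 0")
    case True
    then show ?thesis using x0 by simp
  next
    case False
    then show ?thesis using \<open>x0 \<in> ?K\<close> by simp
  qed
  have "(\<forall>z. f x \<le> f z) \<longleftrightarrow> f x \<le> f x0" for x
    using min[of _] order.trans[of "f x" "f x0"] by blast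
  then have "{x. \<forall>z. f x \<le> f z} = {x. f x \<le> f x0}"
    by simp
  then show ?thesis
    using compact_sublevel_set_coercive[OF assms] by auto
qed

lemma linear_pair_bounded_below:
  fixes L :: "'a::euclidean_space \<Rightarrow> 'b::euclidean_space"
    and M :: "'a \<Rightarrow> 'c::euclidean_space"
  assumes "linear L" and "linear M" and "{x. L x = 0} \<inter> {x. M x = 0} = {0}"
  obtains B where "B > 0" and "\<And>x. B * norm x \<le> norm (L x) + norm (M x)"
proof -
  let ?g = "\<lambda>x. (L x, M x)"
  have lin: "linear ?g"
    using assms(1,2) unfolding linear_conv_bounded_linear by (rule bounded_linear_Pair)
  have "inj ?g"
    unfolding linear_injective_0[OF lin]
  proof (intro allI impI)
    fix x
    assume "?g x = 0"
    then have "x \<in> {x. L x = 0} \<inter> {x. M x = 0}"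
      by (simp add: zero_prod_def)
    then show "x = 0"
      using assms(3) by blast
  qed
  then obtain B where "B > 0" and B: "\<And>x. B * norm x \<le> norm (?g x)"
    using linear_inj_bounded_below_pos[OF lin] by blast
  have "B * norm x \<le> norm (L x) + norm (M x)" for x
    using B[of x] norm_Pair_le[of "L x" "M x"] by linarith
  with \<open>B > 0\<close> show thesis
    by (rule that)
qed

lemma coercive_residual_plus_norm_square:
  fixes \<Phi> :: "'b::euclidean_space \<Rightarrow> real"
    and L :: "'a::euclidean_space \<Rightarrow> 'b" and M :: "'a \<Rightarrow> 'c::euclidean_space"
  assumes "coercive \<Phi>" and bdd: "\<And>z. m \<le> \<Phi> z"
    and "linear L" and "linear M" and "{x. L x = 0} \<inter> {x. M x = 0} = {0}"
  shows "coercive (\<lambda>x. \<Phi> (L x - y) + (norm (M x))\<^sup>2)"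
  unfolding coercive_iff
proof
  fix K
  obtain B where "B > 0" and B: "\<And>x. B * norm x \<le> norm (L x) + norm (M x)"
    using linear_pair_bounded_below assms(3-5) by blast
  obtain R where R: "\<And>z. R \<le> norm z \<Longrightarrow> K \<le> \<Phi> z"
    using assms(1) unfolding coercive_iff by blast
  \<comment> \<open>beyond \<open>T\<close>, a small residual forces \<open>\<parallel>M x\<parallel> \<ge> max 1 (K - m)\<close>\<close>
  define T where "T = (\<bar>R\<bar> + norm y + \<bar>K - m\<bar> + 1) / B"
  have "K \<le> \<Phi> (L x - y) + (norm (M x))\<^sup>2" if "T \<le> norm x" for x
  proof (cases "R \<le> norm (L x - y)")
    case True
    then show ?thesis
      using R[OF True] by (simp add: add_increasing2)
  next
    case False
    have "\<bar>R\<bar> + norm y + \<bar>K - m\<bar> + 1 \<le> B * norm x"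
      using that \<open>B > 0\<close> by (simp add: T_def divide_le_eq mult.commute)
    moreover have "norm (L x) \<le> norm (L x - y) + norm y"
      by (metis diff_add_cancel norm_triangle_ineq)
    ultimately have large: "\<bar>K - m\<bar> + 1 \<le> norm (M x)"
      using False B[of x] by linarith
    then have "norm (M x) * 1 \<le> norm (M x) * norm (M x)"
      by (intro mult_left_mono) auto
    then have "norm (M x) \<le> (norm (M x))\<^sup>2"
      by (simp add: power2_eq_square)
    then show ?thesis
      using large bdd[of "L x - y"] by linarith
  qed
  then show "\<exists>T. \<forall>x. T \<le> norm x \<longrightarrow> K \<le> \<Phi> (L x - y) + (norm (M x))\<^sup>2"
    by blast
qed

lemma continuous_on_F_obj:
  assumes "continuous_on UNIV Phi"
    and "\<And>s. s \<in> {1..S} \<Longrightarrow> continuous_on UNIV (psi s \<delta>)"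
  shows "continuous_on UNIV (F_obj Phi H y V0 S P V c psi \<delta>)"
proof -
  have "continuous_on UNIV (\<lambda>x. H *v x - y)"
    by (intro continuous_on_diff continuous_on_const linear_continuous_on
        matrix_vector_mul_bounded_linear)
  then have "continuous_on UNIV (\<lambda>x. Phi (H *v x - y))"
    by (rule continuous_on_compose2[OF assms(1)]) auto
  moreover have "continuous_on UNIV (resid_norm (V s) (c s) (P s))" for s
    unfolding resid_norm_def by (intro continuous_intros)
  then have "continuous_on UNIV (\<lambda>x. \<Sum>s=1..S. psi s \<delta> (resid_norm (V s) (c s) (P s) x))"
    by (intro continuous_on_sum continuous_on_compose2[OF assms(2)]) auto
  moreover have "continuous_on UNIV (\<lambda>x. (norm (V0 *v x))\<^sup>2)"
    by (intro continuous_intros linear_continuous_on matrix_vector_mul_bounded_linear)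
  ultimately show ?thesis
    unfolding F_obj_def[abs_def] by (intro continuous_on_add)
qed

theorem proposition1:
  fixes Phi :: "real ^ 'q \<Rightarrow> real"
    and H :: "real ^ 'n ^ 'q" and y :: "real ^ 'q"
    and V0 :: "real ^ 'n ^ 'm"
    and S :: nat and P :: "nat \<Rightarrow> nat"
    and V :: "nat \<Rightarrow> nat \<Rightarrow> real ^ 'n" and c :: "nat \<Rightarrow> nat \<Rightarrow> real"
    and psi :: "nat \<Rightarrow> real \<Rightarrow> real \<Rightarrow> real"
  assumes "S \<ge> 1"
    and "\<forall>s\<in>{1..S}. P s \<ge> 1"
    and "H \<noteq> 0"
    and "continuous_on UNIV Phi"
    and "coercive Phi"
    and "\<forall>\<delta>>0. \<forall>s\<in>{1..S}. continuous_on UNIV (psi s \<delta>) \<and> (\<forall>t. psi s \<delta> t \<ge> 0)"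
    and "{x. H *v x = 0} \<inter> {x. V0 *v x = 0} = {0}"
  shows "\<forall>\<delta>>0. coercive (F_obj Phi H y V0 S P V c psi \<delta>) \<and>
           {x. \<forall>z. F_obj Phi H y V0 S P V c psi \<delta> x \<le> F_obj Phi H y V0 S P V c psi \<delta> z} \<noteq> {} \<and>
           compact {x. \<forall>z. F_obj Phi H y V0 S P V c psi \<delta> x \<le> F_obj Phi H y V0 S P V c psi \<delta> z}"
proof (intro allI impI)
  fix \<delta> :: real
  assume "\<delta> > 0"
  let ?F = "F_obj Phi H y V0 S P V c psi \<delta>"
  have psi: "continuous_on UNIV (psi s \<delta>)" "psi s \<delta> t \<ge> 0" if "s \<in> {1..S}" for s t
    using assms(6) \<open>\<delta> > 0\<close> that by blast+
  obtain m where "\<And>z. m \<le> Phi z"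
    using coercive_bdd_below[OF assms(4,5)] by blast
  then have "coercive (\<lambda>x. Phi (H *v x - y) + (norm (V0 *v x))\<^sup>2)"
    by (rule coercive_residual_plus_norm_square[OF assms(5) _
          matrix_vector_mul_linear matrix_vector_mul_linear assms(7)])
  moreover have "Phi (H *v x - y) + (norm (V0 *v x))\<^sup>2 \<le> ?F x" for x
    unfolding F_obj_def using psi(2) by (auto intro!: sum_nonneg)
  ultimately have "coercive ?F"
    by (rule coercive_mono)
  moreover have "continuous_on UNIV ?F"
    by (intro continuous_on_F_obj assms(4) psi(1))
  ultimately show "coercive ?F \<and> {x. \<forall>z. ?F x \<le> ?F z} \<noteq> {} \<and> compact {x. \<forall>z. ?F x \<le> ?F z}"
    using coercive_minimizers_nonempty_compact by blast
qed

end
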